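(* For a thermodynamic Stephani universe with $\dot R\neq0$, $b'(R)\neq0$ and $a(R)\neq0$, one has $$\pi=\frac p\rho=\frac{a(R)\,(1+b w)}{1+(b-Rb')w}-1,$$ and the indicatrix $\chi=u(p)/u(\rho)$ is $$\chi=\pi+\frac13+\frac13(\pi+1)\big[(\pi+1)A_1(R)+A_2(R)\big],\qquad A_1=-\frac{Rb''}{a^2b'},\quad A_2=\frac{Rb''}{ab'}-\frac{a'R}{a^2}-\frac1a .$$ Consequently (since $\rho$ is a function of $R$), $c_s^2=\chi(\rho,p)=\pi+\frac13+\frac13(\pi+1)[(\pi+1)A_1(\rho)+A_2(\rho)]$ for two real functions $A_1(\rho),A_2(\rho)$.
   Context: Thermodynamic Stephani universe: $ds^2=-\alpha^2dt^2+\Omega^2(dx^2+dy^2+dz^2)$ with $L=R(t)/(1+b(t)w)$, $\Omega=\frac{w}{2z}L$, $\alpha=R\,\partial_R\ln L$, $w=2z/(1+\frac\varepsilon4 r^2)$, $r^2=x^2+y^2+z^2$, $\varepsilon\in\{0,\pm1\}$, $R(t),b(t)$ arbitrary; functions of $t$ are regarded as functions of $R$ and a prime denotes $d/dR$; thus $\alpha=\frac{1+(b-Rb')w}{1+bw}$. Fluid velocity $u=\alpha^{-1}\partial_t$, $\rho=\frac{3}{R^2}(\dot R^2+\varepsilon-4b^2)$, $p=-\rho-\frac R3\frac{\rho'(R)}{\alpha}$, and $a(R)\equiv-\frac{R\rho'(R)}{3\rho}$. *)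

theory Defs
  imports "HOL-Analysis.Analysis"
begin

text \<open>Thermodynamic Stephani universe. Functions of t are regarded as
functions of R; b and rho are functions of R, a prime is d/dR (deriv).
Rt is the scale factor R(t).\<close>

definition stephani_w :: "real \<Rightarrow> real \<Rightarrow> real \<Rightarrow> real \<Rightarrow> real" where
  "stephani_w \<epsilon> x y z = 2 * z / (1 + \<epsilon> / 4 * (x^2 + y^2 + z^2))"

definition stephani_alpha :: "(real \<Rightarrow> real) \<Rightarrow> real \<Rightarrow> real \<Rightarrow> real" where
  "stephani_alpha b R w = (1 + (b R - R * deriv b R) * w) / (1 + b R * w)"

definition stephani_p :: "(real \<Rightarrow> real) \<Rightarrow> (real \<Rightarrow> real) \<Rightarrow> real \<Rightarrow> real \<Rightarrow> real" where
  "stephani_p rho b R w = - rho R - R / 3 * deriv rho R / stephani_alpha b R w"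

definition stephani_a :: "(real \<Rightarrow> real) \<Rightarrow> real \<Rightarrow> real" where
  "stephani_a rho R = - R * deriv rho R / (3 * rho R)"

definition stephani_A1 :: "(real \<Rightarrow> real) \<Rightarrow> (real \<Rightarrow> real) \<Rightarrow> real \<Rightarrow> real" where
  "stephani_A1 rho b R =
     - R * deriv (deriv b) R / ((stephani_a rho R)^2 * deriv b R)"

definition stephani_A2 :: "(real \<Rightarrow> real) \<Rightarrow> (real \<Rightarrow> real) \<Rightarrow> real \<Rightarrow> real" where
  "stephani_A2 rho b R =
     R * deriv (deriv b) R / (stephani_a rho R * deriv b R)
     - deriv (stephani_a rho) R * R / (stephani_a rho R)^2
     - 1 / stephani_a rho R"

text \<open>Action of the fluid velocity u = alpha^{-1} d/dt on a scalar whose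
dependence on t (at a fixed spatial point) is F.\<close>
definition fluid_u :: "real \<Rightarrow> (real \<Rightarrow> real) \<Rightarrow> real \<Rightarrow> real" where
  "fluid_u alph F t = deriv F t / alph"

end

theory Submission
  imports Defs
begin

text \<open>With \<open>\<beta> = 1/\<alpha> = (1 + b w)/(1 + (b - R b') w)\<close>, the definition of \<open>a\<close> turns the
pressure into \<open>p = \<rho> (a \<beta> - 1)\<close>, which is the formula for \<open>\<pi>\<close>. Along the flow both
\<open>u(p)\<close> and \<open>u(\<rho>)\<close> carry the same factor \<open>\<dot>R/\<alpha>\<close>, so \<open>\<chi> = p'(R)/\<rho>'(R)\<close>.
Differentiating \<open>p = \<rho> (a \<beta> - 1)\<close> by the product rule and eliminating
\<open>\<rho>' = -3 a \<rho>/R\<close> and \<open>\<beta>' = (\<beta> - 1)(1 + R b'' \<beta>/b')/R\<close> (the latter because the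
numerator and denominator of \<open>\<beta>\<close> differ by \<open>R b' w\<close>), then substituting
\<open>\<beta> = (\<pi> + 1)/a\<close>, gives the formula for \<open>\<chi>\<close>.\<close>

definition inverse_lapse :: "(real \<Rightarrow> real) \<Rightarrow> real \<Rightarrow> real \<Rightarrow> real" where
  "inverse_lapse b w r = (1 + b r * w) / (1 + (b r - r * deriv b r) * w)"

lemma divide_stephani_alpha: "u / stephani_alpha b r w = u * inverse_lapse b w r"
  unfolding stephani_alpha_def inverse_lapse_def by simp

lemma stephani_p_eq:
  assumes "rho r \<noteq> 0"
  shows "stephani_p rho b r w = rho r * (stephani_a rho r * inverse_lapse b w r - 1)"
  using assms unfolding stephani_p_def stephani_a_def divide_stephani_alpha
  by (simp add: field_simps)

lemma inverse_lapse_has_derivative: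
  assumes b: "b differentiable (at r)" and b': "deriv b differentiable (at r)"
    and "r \<noteq> 0" "deriv b r \<noteq> 0" and den: "1 + (b r - r * deriv b r) * w \<noteq> 0"
  shows "(inverse_lapse b w has_real_derivative
           (inverse_lapse b w r - 1) * (1 + r * deriv (deriv b) r / deriv b r * inverse_lapse b w r) / r)
         (at r)"
proof -
  define N D where "N = 1 + b r * w" and "D = 1 + (b r - r * deriv b r) * w"
  have "D \<noteq> 0" using den unfolding D_def .
  have raw: "(inverse_lapse b w has_real_derivative
          ((deriv b r * w) * D + N * r * (deriv (deriv b) r * w)) / D\<^sup>2) (at r)"
    unfolding inverse_lapse_def[abs_def] N_def D_def
    apply (rule derivative_eq_intros
        b[unfolded DERIV_deriv_iff_real_differentiable[symmetric]]
        b'[unfolded DERIV_deriv_iff_real_differentiable[symmetric]] refl)+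
    using den by (auto simp: power2_eq_square algebra_simps)
  have b1w: "deriv b r * w = (N - D) / r"
    using \<open>r \<noteq> 0\<close> unfolding N_def D_def by (simp add: field_simps)
  have b2w: "deriv (deriv b) r * w = deriv (deriv b) r / deriv b r * ((N - D) / r)"
    using \<open>deriv b r \<noteq> 0\<close> b1w by (metis nonzero_eq_divide_eq mult.assoc mult.commute)
  have "((deriv b r * w) * D + N * r * (deriv (deriv b) r * w)) / D\<^sup>2
      = (N / D - 1) * (1 + r * deriv (deriv b) r / deriv b r * (N / D)) / r"
    unfolding b1w b2w using assms(3,4) \<open>D \<noteq> 0\<close> by (simp add: field_simps power2_eq_square)
  moreover have "inverse_lapse b w r = N / D" unfolding inverse_lapse_def N_def D_def ..
  ultimately show ?thesis using raw by simp
qed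

lemma stephani_a_differentiable:
  assumes "rho differentiable (at r)" "deriv rho differentiable (at r)" "rho r \<noteq> 0"
  shows "stephani_a rho differentiable (at r)"
  unfolding stephani_a_def[abs_def] using assms by (intro derivative_intros) auto

lemma stephani_p_has_derivative:
  assumes rho: "(rho has_real_derivative rho') (at r)" and "rho r \<noteq> 0"
    and a: "(stephani_a rho has_real_derivative a') (at r)"
    and beta: "(inverse_lapse b w has_real_derivative beta') (at r)"
  shows "((\<lambda>s. stephani_p rho b s w) has_real_derivative
           rho' * (stephani_a rho r * inverse_lapse b w r - 1)
           + rho r * (a' * inverse_lapse b w r + stephani_a rho r * beta')) (at r)"
proof -
  have "\<forall>\<^sub>F s in nhds r. rho s \<noteq> 0"
    using DERIV_isCont[OF rho] \<open>rho r \<noteq> 0\<close>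
    by (intro tendsto_imp_eventually_ne) (auto simp: isCont_def tendsto_at_iff_tendsto_nhds)
  then have "\<forall>\<^sub>F s in nhds r.
      stephani_p rho b s w = rho s * (stephani_a rho s * inverse_lapse b w s - 1)"
    by eventually_elim (rule stephani_p_eq)
  moreover have "((\<lambda>s. rho s * (stephani_a rho s * inverse_lapse b w s - 1)) has_real_derivative
      rho' * (stephani_a rho r * inverse_lapse b w r - 1)
      + rho r * (a' * inverse_lapse b w r + stephani_a rho r * beta')) (at r)"
    by (rule derivative_eq_intros rho a beta refl)+ (simp add: algebra_simps)
  ultimately show ?thesis by (subst DERIV_cong_ev[OF refl _ refl])
qed

lemma fluid_u_ratio_chain:
  assumes R: "(R has_real_derivative R') (at t)" "R' \<noteq> 0" and "alph \<noteq> 0"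
    and F: "(F has_real_derivative F') (at (R t))" and G: "(G has_real_derivative G') (at (R t))"
  shows "fluid_u alph (\<lambda>s. F (R s)) t / fluid_u alph (\<lambda>s. G (R s)) t = F' / G'"
proof -
  have "deriv (\<lambda>s. F (R s)) t = F' * R'" "deriv (\<lambda>s. G (R s)) t = G' * R'"
    using DERIV_chain2[OF F R(1)] DERIV_chain2[OF G R(1)] by (auto intro: DERIV_imp_deriv)
  then show ?thesis unfolding fluid_u_def using assms(2,3) by simp
qed

lemma indicatrix_identity:
  fixes r rho rho' a a' beta beta' b' b'' pr :: real
  assumes "r \<noteq> 0" "rho \<noteq> 0" "a \<noteq> 0" and a: "a = - r * rho' / (3 * rho)"
    and beta': "beta' = (beta - 1) * (1 + r * b'' / b' * beta) / r"
    and pr: "pr = a * beta - 1"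
  shows "(rho' * (a * beta - 1) + rho * (a' * beta + a * beta')) / rho'
      = pr + 1/3 + 1/3 * (pr + 1) * ((pr + 1) * (- r * b'' / (a\<^sup>2 * b'))
          + (r * b'' / (a * b') - a' * r / a\<^sup>2 - 1 / a))"
proof -
  have rho': "rho' = - 3 * a * rho / r" using assms(1,2) a by (simp add: field_simps)
  show ?thesis unfolding rho' beta' pr using assms(1-3)
    by (cases "b' = 0") (simp_all add: field_simps power2_eq_square)
qed

theorem mainTheorem10:
  fixes Rt b rho :: "real \<Rightarrow> real"
    and \<epsilon> x y z t0 :: real
    and T S :: "real set"
  assumes eps: "\<epsilon> \<in> {-1, 0, 1}"
    and T: "open T" "t0 \<in> T"
    and Rt_diff: "\<forall>t\<in>T. Rt differentiable (at t)"
    and Rt_pos: "\<forall>t\<in>T. Rt t > 0"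
    and rho_def: "\<forall>t\<in>T. rho (Rt t)
          = 3 / (Rt t)^2 * ((deriv Rt t)^2 + \<epsilon> - 4 * (b (Rt t))^2)"
    and S: "open S" "Rt t0 \<in> S"
    and b_diff: "\<forall>r\<in>S. b differentiable (at r)"
    and rho_diff: "\<forall>r\<in>S. rho differentiable (at r)"
    and b2_diff: "deriv b differentiable (at (Rt t0))"
    and rho2_diff: "deriv rho differentiable (at (Rt t0))"
    and Rdot: "deriv Rt t0 \<noteq> 0"
    and bprime: "deriv b (Rt t0) \<noteq> 0"
    and a_nz: "stephani_a rho (Rt t0) \<noteq> 0"
    and den1: "1 + b (Rt t0) * stephani_w \<epsilon> x y z \<noteq> 0"
    and den2: "1 + (b (Rt t0) - Rt t0 * deriv b (Rt t0)) * stephani_w \<epsilon> x y z \<noteq> 0"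
  shows "(let R = Rt t0; w = stephani_w \<epsilon> x y z;
              pr = stephani_p rho b R w / rho R;
              chi = fluid_u (stephani_alpha b R w) (\<lambda>t. stephani_p rho b (Rt t) w) t0
                  / fluid_u (stephani_alpha b R w) (\<lambda>t. rho (Rt t)) t0
          in pr = stephani_a rho R * (1 + b R * w) / (1 + (b R - R * deriv b R) * w) - 1
           \<and> chi = pr + 1/3 + 1/3 * (pr + 1) *
                   ((pr + 1) * stephani_A1 rho b R + stephani_A2 rho b R))"
proof -
  define R w where "R = Rt t0" and "w = stephani_w \<epsilon> x y z"
  have "R \<noteq> 0" "rho R \<noteq> 0" using a_nz unfolding stephani_a_def R_def by auto
  have rho_R: "rho differentiable (at R)" and b_R: "b differentiable (at R)"
    using rho_diff b_diff S unfolding R_def by auto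
  have rho: "(rho has_real_derivative deriv rho R) (at R)"
    using rho_R by (simp add: DERIV_deriv_iff_real_differentiable)
  have a: "(stephani_a rho has_real_derivative deriv (stephani_a rho) R) (at R)"
    using stephani_a_differentiable[OF rho_R rho2_diff[folded R_def] \<open>rho R \<noteq> 0\<close>]
    by (simp add: DERIV_deriv_iff_real_differentiable)
  note beta = inverse_lapse_has_derivative[OF b_R b2_diff[folded R_def] \<open>R \<noteq> 0\<close>
      bprime[folded R_def] den2[folded R_def w_def]]
  note p = stephani_p_has_derivative[OF rho \<open>rho R \<noteq> 0\<close> a beta]
  have Rt: "(Rt has_real_derivative deriv Rt t0) (at t0)"
    using Rt_diff T by (simp add: DERIV_deriv_iff_real_differentiable)
  have "stephani_alpha b R w \<noteq> 0"
    using den1 den2 unfolding stephani_alpha_def R_def w_def by simp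
  note chi = fluid_u_ratio_chain[OF Rt Rdot this p[unfolded R_def] rho[unfolded R_def], folded R_def]
  have pr: "stephani_p rho b R w / rho R = stephani_a rho R * inverse_lapse b w R - 1"
    using stephani_p_eq[of rho R b w] \<open>rho R \<noteq> 0\<close> by simp
  show ?thesis
    unfolding Let_def R_def[symmetric] w_def[symmetric] chi stephani_A1_def stephani_A2_def
    using indicatrix_identity[OF \<open>R \<noteq> 0\<close> \<open>rho R \<noteq> 0\<close> a_nz[folded R_def]
        stephani_a_def refl pr]
    by (simp add: pr inverse_lapse_def)
qed

end
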